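(* Fix $N=\{1,\dots,n\}$ and $N_0=N\cup\{0\}$, and let $RS^{N_0}$ be the class of RS-games with player set $N_0$. There is a unique solution $\xi$ on $RS^{N_0}$ satisfying (EF), (SR), (RR) and (PD), namely \[\xi_0(v)=n\beta,\qquad \xi_i(v)=v(\{0,i\})-\beta\ \ (i\in N),\qquad\text{where }\beta=\min_{S\subseteq N,\,S\neq\emptyset}\frac{v(S_0)-v(S)}{s}.\] Here, for a solution $\varphi$ and every $v\in RS^{N_0}$: (EF) $\sum_{i\in N_0}\varphi_i(v)=v(N_0)$; (SR) $\sum_{i\in S}\varphi_i(v)\ge v(S)$ for all coalitions $S\subseteq N$; (RR) for every $i\in N$ there is a nonempty coalition $S^i\subseteq N$ with $\varphi_i(v)=v(\{0,i\})-\frac{v(S^i_0)-v(S^i)}{s^i}$, where $s^i=|S^i|$; (PD) $\varphi_i(v)-\varphi_j(v)=v(\{0,i\})-v(\{0,j\})$ for all $i,j\in N$ with $i\neq j$.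
   Context: Let $c\in\mathbb{R}$. An RS-problem is a triple $(c,w,p)$ where $w:\mathbb{R}_+\to(c,+\infty)$ is decreasing (non-increasing) and continuous, and $p:\mathbb{R}_+\to\mathbb{R}$ is decreasing (non-increasing) and continuous, satisfies $p(0)>w(0)$, and there exists $q>0$ with $p(q)=c$. An RS-situation is a tuple $(N_0,c,w,P)$ where $N=\{1,\dots,n\}$ is the set of retailers, $0$ denotes the supplier, $N_0=N\cup\{0\}$, $P=(p_1,\dots,p_n)$, and $(c,w,p_i)$ is an RS-problem for each $i\in N$. For $S\subseteq N$ write $S_0=S\cup\{0\}$ and $s=|S|$. For $q\ge0$ and $\omega\in\mathbb{R}$, $\Pi_i^{ret}(q;\omega)=(p_i(q)-\omega)q$. For nonempty $S\subseteq N$, $(q_i^S)_{i\in S}$ is a fixed optimal solution of: maximize $\sum_{i\in S}(p_i(q_i)-w(q_S))q_i$ over $q\in\mathbb{R}_+^{S}$ subject to $p_i(q_i)\ge w(q_S)$ for all $i\in S$, where $q_S=\sum_{i\in S}q_i$; $q_S^S=\sum_{i\in S}q_i^S$. For $i\in N$, $q_i^c$ is a fixed optimal solution of: maximize $(p_i(q)-c)q$ over $q\ge0$ subject to $p_i(q)\ge c$. The corresponding RS-game $(N_0,v)$ is the TU game on $N_0$ with $v(\emptyset)=0$ and, for all $S\subseteq N$, $v(S)=\sum_{i\in S}\Pi_i^{ret}(q_i^S;w(q_S^S))$ and $v(S_0)=\sum_{i\in S}\Pi_i^{ret}(q_i^c;c)$. A (single-valued) solution on $RS^{N_0}$ is a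 map $\varphi$ assigning to each $v\in RS^{N_0}$ a vector $\varphi(v)=(\varphi_i(v))_{i\in N_0}\in\mathbb{R}^{N_0}$. *)

theory Defs
  imports "HOL-Analysis.Analysis"
begin

text \<open>Players are natural numbers: 0 is the supplier, retailers are 1..n.
  A TU game on N0 = {0..n} is a function on nat sets (zero outside subsets of N0).\<close>

definition rs_problem :: "real \<Rightarrow> (real \<Rightarrow> real) \<Rightarrow> (real \<Rightarrow> real) \<Rightarrow> bool" where
  "rs_problem c w p \<longleftrightarrow>
     (\<forall>x\<ge>0. w x > c) \<and> (\<forall>x y. 0 \<le> x \<longrightarrow> x \<le> y \<longrightarrow> w y \<le> w x) \<and> continuous_on {0..} w \<and>
     (\<forall>x y. 0 \<le> x \<longrightarrow> x \<le> y \<longrightarrow> p y \<le> p x) \<and> continuous_on {0..} p \<and>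
     p 0 > w 0 \<and> (\<exists>q>0. p q = c)"

definition ret_profit :: "(real \<Rightarrow> real) \<Rightarrow> real \<Rightarrow> real \<Rightarrow> real" where
  "ret_profit p q \<omega> = (p q - \<omega>) * q"

definition coal_feasible :: "(real \<Rightarrow> real) \<Rightarrow> (nat \<Rightarrow> real \<Rightarrow> real) \<Rightarrow> nat set \<Rightarrow> (nat \<Rightarrow> real) \<Rightarrow> bool" where
  "coal_feasible w P S q \<longleftrightarrow> (\<forall>i\<in>S. 0 \<le> q i) \<and> (\<forall>i\<in>S. P i (q i) \<ge> w (\<Sum>j\<in>S. q j))"

definition coal_obj :: "(real \<Rightarrow> real) \<Rightarrow> (nat \<Rightarrow> real \<Rightarrow> real) \<Rightarrow> nat set \<Rightarrow> (nat \<Rightarrow> real) \<Rightarrow> real" where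
  "coal_obj w P S q = (\<Sum>i\<in>S. ret_profit (P i) (q i) (w (\<Sum>j\<in>S. q j)))"

definition coal_optimal :: "(real \<Rightarrow> real) \<Rightarrow> (nat \<Rightarrow> real \<Rightarrow> real) \<Rightarrow> nat set \<Rightarrow> (nat \<Rightarrow> real) \<Rightarrow> bool" where
  "coal_optimal w P S q \<longleftrightarrow> coal_feasible w P S q \<and>
     (\<forall>q'. coal_feasible w P S q' \<longrightarrow> coal_obj w P S q' \<le> coal_obj w P S q)"

definition ind_optimal :: "real \<Rightarrow> (real \<Rightarrow> real) \<Rightarrow> real \<Rightarrow> bool" where
  "ind_optimal c p x \<longleftrightarrow> 0 \<le> x \<and> p x \<ge> c \<and>
     (\<forall>y. 0 \<le> y \<longrightarrow> p y \<ge> c \<longrightarrow> (p y - c) * y \<le> (p x - c) * x)"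

text \<open>The RS-game associated to an RS-situation with fixed optimal solutions
  qS S (for the coalition problems) and qc i (for the individual problems).\<close>
definition rs_game_of :: "nat \<Rightarrow> real \<Rightarrow> (real \<Rightarrow> real) \<Rightarrow> (nat \<Rightarrow> real \<Rightarrow> real)
    \<Rightarrow> (nat set \<Rightarrow> nat \<Rightarrow> real) \<Rightarrow> (nat \<Rightarrow> real) \<Rightarrow> nat set \<Rightarrow> real" where
  "rs_game_of n c w P qS qc T =
     (if T \<subseteq> {0..n} then
        (if 0 \<in> T then (\<Sum>i\<in>T - {0}. ret_profit (P i) (qc i) c)
         else (\<Sum>i\<in>T. ret_profit (P i) (qS T i) (w (\<Sum>j\<in>T. qS T j))))
      else 0)"

definition RS_games :: "nat \<Rightarrow> (nat set \<Rightarrow> real) set" where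
  "RS_games n = {v. \<exists>c w P qS qc.
      (\<forall>i\<in>{1..n}. rs_problem c w (P i)) \<and>
      (\<forall>S. S \<subseteq> {1..n} \<longrightarrow> S \<noteq> {} \<longrightarrow> coal_optimal w P S (qS S)) \<and>
      (\<forall>i\<in>{1..n}. ind_optimal c (P i) (qc i)) \<and>
      v = rs_game_of n c w P qS qc}"

definition sol_EF :: "nat \<Rightarrow> ((nat set \<Rightarrow> real) \<Rightarrow> nat \<Rightarrow> real) \<Rightarrow> bool" where
  "sol_EF n \<phi> \<longleftrightarrow> (\<forall>v\<in>RS_games n. (\<Sum>i\<in>{0..n}. \<phi> v i) = v {0..n})"

definition sol_SR :: "nat \<Rightarrow> ((nat set \<Rightarrow> real) \<Rightarrow> nat \<Rightarrow> real) \<Rightarrow> bool" where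
  "sol_SR n \<phi> \<longleftrightarrow> (\<forall>v\<in>RS_games n. \<forall>S. S \<subseteq> {1..n} \<longrightarrow> (\<Sum>i\<in>S. \<phi> v i) \<ge> v S)"

definition sol_RR :: "nat \<Rightarrow> ((nat set \<Rightarrow> real) \<Rightarrow> nat \<Rightarrow> real) \<Rightarrow> bool" where
  "sol_RR n \<phi> \<longleftrightarrow> (\<forall>v\<in>RS_games n. \<forall>i\<in>{1..n}. \<exists>S. S \<subseteq> {1..n} \<and> S \<noteq> {} \<and>
      \<phi> v i = v {0, i} - (v (insert 0 S) - v S) / real (card S))"

definition sol_PD :: "nat \<Rightarrow> ((nat set \<Rightarrow> real) \<Rightarrow> nat \<Rightarrow> real) \<Rightarrow> bool" where
  "sol_PD n \<phi> \<longleftrightarrow> (\<forall>v\<in>RS_games n. \<forall>i\<in>{1..n}. \<forall>j\<in>{1..n}. i \<noteq> j \<longrightarrow>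
      \<phi> v i - \<phi> v j = v {0, i} - v {0, j})"

definition rs_beta :: "nat \<Rightarrow> (nat set \<Rightarrow> real) \<Rightarrow> real" where
  "rs_beta n v = Min {(v (insert 0 S) - v S) / real (card S) | S. S \<subseteq> {1..n} \<and> S \<noteq> {}}"

definition rs_xi :: "nat \<Rightarrow> (nat set \<Rightarrow> real) \<Rightarrow> nat \<Rightarrow> real" where
  "rs_xi n v i = (if i = 0 then real n * rs_beta n v else v {0, i} - rs_beta n v)"

end

theory Submission
  imports Defs
begin

text \<open>Once the supplier is in a coalition the wholesale price is the cost \<open>c\<close> and the retailers'
  problems decouple, so \<open>v(S\<^sub>0)\<close> is the sum of the \<open>v({0,i})\<close>, \<open>i \<in> S\<close>. Hence (PD) forces
  payoffs \<open>v({0,i}) - \<gamma>\<close> with a common discount \<open>\<gamma>\<close>, and (SR) for a nonempty coalition \<open>S\<close>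
  reads \<open>\<gamma> \<le> (v(S\<^sub>0) - v(S))/s\<close>, i.e. \<open>\<gamma> \<le> \<beta>\<close>. By (RR) \<open>\<gamma>\<close> is one of these quotients, so
  \<open>\<gamma> \<ge> \<beta>\<close>, and (EF) leaves \<open>n\<beta>\<close> for the supplier.\<close>

lemma atLeast0AtMost_eq_insert_0: "{0..n} = insert 0 {1..n :: nat}"
  by auto

lemma RS_games_empty: "v \<in> RS_games n \<Longrightarrow> v {} = 0"
  by (auto simp: RS_games_def rs_game_of_def)

lemma RS_games_insert_supplier:
  assumes v: "v \<in> RS_games n" and S: "S \<subseteq> {1..n}"
  shows "v (insert 0 S) = (\<Sum>i\<in>S. v {0, i})"
proof -
  obtain c w P qS qc where v_def: "v = rs_game_of n c w P qS qc"
    using v by (auto simp: RS_games_def)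
  have "v {0, i} = ret_profit (P i) (qc i) c" if "i \<in> S" for i
  proof -
    have "{0, i} \<subseteq> {0..n}" "{0, i} - {0} = {i}" using that S by auto
    then show ?thesis by (simp add: v_def rs_game_of_def)
  qed
  moreover have "insert 0 S \<subseteq> {0..n}" "insert 0 S - {0} = S" using S by auto
  ultimately show ?thesis by (simp add: v_def rs_game_of_def)
qed

lemma RS_games_grand_coalition:
  "v \<in> RS_games n \<Longrightarrow> v {0..n} = (\<Sum>i\<in>{1..n}. v {0, i})"
  using RS_games_insert_supplier[of v n "{1..n}"] by (simp add: atLeast0AtMost_eq_insert_0)

lemma finite_rs_beta_quotients:
  fixes n :: nat
  shows "finite {(v (insert 0 S) - v S) / real (card S) | S. S \<subseteq> {1..n} \<and> S \<noteq> {}}"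
proof -
  have "finite ((\<lambda>S. (v (insert 0 S) - v S) / real (card S)) ` Pow {1..n})"
    by simp
  then show ?thesis
    by (rule finite_subset[rotated]) auto
qed

lemma rs_beta_le:
  fixes n :: nat
  assumes "S \<subseteq> {1..n}" "S \<noteq> {}"
  shows "rs_beta n v \<le> (v (insert 0 S) - v S) / real (card S)"
  unfolding rs_beta_def using assms by (intro Min_le[OF finite_rs_beta_quotients]) auto

lemma rs_beta_attained:
  assumes "1 \<le> n"
  obtains S where "S \<subseteq> {1..n}" "S \<noteq> {}" "rs_beta n v = (v (insert 0 S) - v S) / real (card S)"
proof -
  have "{1} \<subseteq> {1..n}" using assms by auto
  then have "{(v (insert 0 S) - v S) / real (card S) | S. S \<subseteq> {1..n} \<and> S \<noteq> {}} \<noteq> {}"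
    by blast
  from Min_in[OF finite_rs_beta_quotients this] that show ?thesis
    unfolding rs_beta_def by auto
qed

lemma ex_common_offset:
  fixes x a :: "'a \<Rightarrow> real"
  assumes "\<forall>i\<in>I. \<forall>j\<in>I. i \<noteq> j \<longrightarrow> x i - x j = a i - a j"
  shows "\<exists>\<gamma>. \<forall>i\<in>I. x i = a i - \<gamma>"
proof (cases "I = {}")
  case False
  then obtain j where "j \<in> I" by blast
  with assms have "\<forall>i\<in>I. x i = a i - (a j - x j)" by fastforce
  then show ?thesis ..
qed simp

lemma coalition_stable_iff:
  assumes v: "v \<in> RS_games n" and S: "S \<subseteq> {1..n}" "S \<noteq> {}"
  shows "v S \<le> (\<Sum>i\<in>S. v {0, i} - \<gamma>) \<longleftrightarrow> \<gamma> \<le> (v (insert 0 S) - v S) / real (card S)"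
proof -
  have eq: "(\<Sum>i\<in>S. v {0, i} - \<gamma>) = v (insert 0 S) - real (card S) * \<gamma>"
    using RS_games_insert_supplier[OF v S(1)] by (simp add: sum_subtractf)
  have "card S > 0" using S finite_subset[OF S(1)] by (simp add: card_gt_0_iff)
  have "v S \<le> (\<Sum>i\<in>S. v {0, i} - \<gamma>) \<longleftrightarrow> \<gamma> * real (card S) \<le> v (insert 0 S) - v S"
    unfolding eq mult.commute[of \<gamma>] by linarith
  also have "\<dots> \<longleftrightarrow> \<gamma> \<le> (v (insert 0 S) - v S) / real (card S)"
    using \<open>card S > 0\<close> by (simp add: pos_le_divide_eq)
  finally show ?thesis .
qed

lemma stable_if_le_rs_beta:
  assumes v: "v \<in> RS_games n" and x: "\<forall>i\<in>{1..n}. x i = v {0, i} - \<gamma>"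
    and "\<gamma> \<le> rs_beta n v" and S: "S \<subseteq> {1..n}"
  shows "v S \<le> (\<Sum>i\<in>S. x i)"
proof (cases "S = {}")
  case False
  have "(\<Sum>i\<in>S. x i) = (\<Sum>i\<in>S. v {0, i} - \<gamma>)"
    using x S by (intro sum.cong) auto
  moreover have "\<gamma> \<le> (v (insert 0 S) - v S) / real (card S)"
    using rs_beta_le[OF S False, of v] \<open>\<gamma> \<le> rs_beta n v\<close> by linarith
  ultimately show ?thesis
    using coalition_stable_iff[OF v S False] by simp
qed (simp add: RS_games_empty[OF v])

lemma le_rs_beta_if_stable:
  assumes v: "v \<in> RS_games n" and x: "\<forall>i\<in>{1..n}. x i = v {0, i} - \<gamma>"
    and stable: "\<forall>S. S \<subseteq> {1..n} \<longrightarrow> v S \<le> (\<Sum>i\<in>S. x i)" and "1 \<le> n"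
  shows "\<gamma> \<le> rs_beta n v"
proof -
  obtain S where S: "S \<subseteq> {1..n}" "S \<noteq> {}"
    and beta: "rs_beta n v = (v (insert 0 S) - v S) / real (card S)"
    using rs_beta_attained[OF \<open>1 \<le> n\<close>] .
  have "(\<Sum>i\<in>S. x i) = (\<Sum>i\<in>S. v {0, i} - \<gamma>)"
    using x S by (intro sum.cong) auto
  with stable S coalition_stable_iff[OF v S] show ?thesis
    unfolding beta by auto
qed

lemma efficient_iff_supplier_payoff:
  assumes v: "v \<in> RS_games n" and x: "\<forall>i\<in>{1..n}. x i = v {0, i} - \<gamma>"
  shows "(\<Sum>i\<in>{0..n}. x i) = v {0..n} \<longleftrightarrow> x 0 = real n * \<gamma>"
proof -
  have "(\<Sum>i\<in>{0..n}. x i) = x 0 + (\<Sum>i\<in>{1..n}. v {0, i} - \<gamma>)"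
    using x by (simp add: atLeast0AtMost_eq_insert_0)
  also have "\<dots> = x 0 + v {0..n} - real n * \<gamma>"
    by (simp add: sum_subtractf RS_games_grand_coalition[OF v])
  finally show ?thesis by linarith
qed

lemma rs_xi_retailer: "\<forall>i\<in>{1..n}. rs_xi n v i = v {0, i} - rs_beta n v"
  by (simp add: rs_xi_def)

lemma rs_xi_properties:
  "sol_EF n (rs_xi n) \<and> sol_SR n (rs_xi n) \<and> sol_RR n (rs_xi n) \<and> sol_PD n (rs_xi n)"
proof (intro conjI)
  show "sol_EF n (rs_xi n)"
    unfolding sol_EF_def
  proof
    fix v assume "v \<in> RS_games n"
    from efficient_iff_supplier_payoff[OF this rs_xi_retailer]
    show "(\<Sum>i\<in>{0..n}. rs_xi n v i) = v {0..n}" by (simp add: rs_xi_def)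
  qed
  show "sol_SR n (rs_xi n)"
    unfolding sol_SR_def
  proof (intro ballI allI impI)
    fix v S assume "v \<in> RS_games n" "S \<subseteq> {1..n}"
    from stable_if_le_rs_beta[OF this(1) rs_xi_retailer order.refl this(2)]
    show "v S \<le> (\<Sum>i\<in>S. rs_xi n v i)" .
  qed
  show "sol_RR n (rs_xi n)"
    unfolding sol_RR_def
  proof (intro ballI)
    fix v i assume i: "i \<in> {1..n}"
    then obtain S where "S \<subseteq> {1..n}" "S \<noteq> {}"
      "rs_beta n v = (v (insert 0 S) - v S) / real (card S)"
      using rs_beta_attained[of n v] by auto
    with i show "\<exists>S. S \<subseteq> {1..n} \<and> S \<noteq> {} \<and>
        rs_xi n v i = v {0, i} - (v (insert 0 S) - v S) / real (card S)"
      by (auto simp: rs_xi_def)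
  qed
  show "sol_PD n (rs_xi n)"
    unfolding sol_PD_def by (simp add: rs_xi_def)
qed

lemma rs_xi_unique:
  assumes EF: "sol_EF n \<phi>" and SR: "sol_SR n \<phi>" and RR: "sol_RR n \<phi>" and PD: "sol_PD n \<phi>"
    and v: "v \<in> RS_games n" and i: "i \<in> {0..n}"
  shows "\<phi> v i = rs_xi n v i"
proof -
  have "\<forall>i\<in>{1..n}. \<forall>j\<in>{1..n}. i \<noteq> j \<longrightarrow> \<phi> v i - \<phi> v j = v {0, i} - v {0, j}"
    using PD v by (simp add: sol_PD_def)
  then obtain \<gamma> where retailers: "\<forall>i\<in>{1..n}. \<phi> v i = v {0, i} - \<gamma>"
    using ex_common_offset[of "{1..n}" "\<phi> v" "\<lambda>i. v {0, i}"] by blast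
  have supplier: "\<phi> v 0 = real n * \<gamma>"
    using efficient_iff_supplier_payoff[OF v retailers] EF v by (simp add: sol_EF_def)
  have "\<gamma> = rs_beta n v" if "1 \<le> n"
  proof (rule antisym)
    show "\<gamma> \<le> rs_beta n v"
      using le_rs_beta_if_stable[OF v retailers _ that] SR v by (simp add: sol_SR_def)
    have "1 \<in> {1..n}" using that by simp
    then obtain S where S: "S \<subseteq> {1..n}" "S \<noteq> {}"
      and "\<phi> v 1 = v {0, 1} - (v (insert 0 S) - v S) / real (card S)"
      using RR v unfolding sol_RR_def by blast
    with retailers \<open>1 \<in> {1..n}\<close> have "\<gamma> = (v (insert 0 S) - v S) / real (card S)"
      by simp
    with rs_beta_le[OF S] show "rs_beta n v \<le> \<gamma>" by simp
  qed
  with i retailers supplier show ?thesis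
    by (cases "n = 0") (auto simp: rs_xi_def)
qed

theorem theorem6p1:
  shows "(sol_EF n (rs_xi n) \<and> sol_SR n (rs_xi n) \<and> sol_RR n (rs_xi n) \<and> sol_PD n (rs_xi n)) \<and>
    (\<forall>\<phi>. sol_EF n \<phi> \<and> sol_SR n \<phi> \<and> sol_RR n \<phi> \<and> sol_PD n \<phi> \<longrightarrow>
       (\<forall>v\<in>RS_games n. \<forall>i\<in>{0..n}. \<phi> v i = rs_xi n v i))"
proof (intro conjI allI impI ballI)
  show "sol_EF n (rs_xi n)" "sol_SR n (rs_xi n)" "sol_RR n (rs_xi n)" "sol_PD n (rs_xi n)"
    using rs_xi_properties by auto
  show "\<phi> v i = rs_xi n v i"
    if "sol_EF n \<phi> \<and> sol_SR n \<phi> \<and> sol_RR n \<phi> \<and> sol_PD n \<phi>" "v \<in> RS_games n" "i \<in> {0..n}"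
    for \<phi> v i
    using rs_xi_unique that by blast
qed

end
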